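(* Let $G$ be a finitely generated group. If there exists an element $x\in G$ whose normal closure in $G$ is abelian and of finite index in $G$, then there exists a finite symmetric generating set $X$ for $G$ with respect to which the geodesic growth of $G$ is polynomial, i.e. there exist $c,d\in\mathbb{N}$ with $\Gamma_{G,X}(n)\le c\,n^d$ for all $n\in\mathbb{N}$.
   Context: For a group $G$ with a finite symmetric generating set $X$ (symmetric meaning $x\in X\Rightarrow x^{-1}\in X$), a word over $X$ is a geodesic if its length equals the word length (with respect to $X$) of the group element it represents. The geodesic growth function $\Gamma_{G,X}(n)$ is the number of geodesic words of length at most $n$, i.e. the number of geodesics of length at most $n$ starting at $1$ in the Cayley graph of $G$ with respect to $X$. *)

theory Defs
  imports "HOL-Algebra.Algebra"
begin

definition word_eval :: "('a, 'b) monoid_scheme \<Rightarrow> 'a list \<Rightarrow> 'a" where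
  "word_eval G w = foldr (\<lambda>x y. x \<otimes>\<^bsub>G\<^esub> y) w \<one>\<^bsub>G\<^esub>"

definition word_length :: "('a, 'b) monoid_scheme \<Rightarrow> 'a set \<Rightarrow> 'a \<Rightarrow> nat" where
  "word_length G S g = Least (\<lambda>n. \<exists>w. set w \<subseteq> S \<and> length w = n \<and> word_eval G w = g)"

definition geodesic :: "('a, 'b) monoid_scheme \<Rightarrow> 'a set \<Rightarrow> 'a list \<Rightarrow> bool" where
  "geodesic G S w \<longleftrightarrow> set w \<subseteq> S \<and> length w = word_length G S (word_eval G w)"

definition geodesic_growth :: "('a, 'b) monoid_scheme \<Rightarrow> 'a set \<Rightarrow> nat \<Rightarrow> nat" where
  "geodesic_growth G S n = card {w. geodesic G S w \<and> length w \<le> n}"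

definition finite_symmetric_generating_set :: "('a, 'b) monoid_scheme \<Rightarrow> 'a set \<Rightarrow> bool" where
  "finite_symmetric_generating_set G S \<longleftrightarrow>
     finite S \<and> S \<subseteq> carrier G \<and> (\<forall>x\<in>S. inv\<^bsub>G\<^esub> x \<in> S) \<and> generate G S = carrier G"

definition finitely_generated :: "('a, 'b) monoid_scheme \<Rightarrow> bool" where
  "finitely_generated G \<longleftrightarrow> (\<exists>S. finite S \<and> S \<subseteq> carrier G \<and> generate G S = carrier G)"

definition normal_closure :: "('a, 'b) monoid_scheme \<Rightarrow> 'a \<Rightarrow> 'a set" where
  "normal_closure G x = generate G ((\<lambda>g. g \<otimes>\<^bsub>G\<^esub> x \<otimes>\<^bsub>G\<^esub> inv\<^bsub>G\<^esub> g) ` carrier G)"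

end

theory Submission
  imports Defs "HOL-Library.Multiset"
begin

text \<open>Let \<open>N\<close> be the normal closure of \<open>x\<close> and \<open>R\<close> a finite transversal of \<open>N\<close>. Writing
  \<open>g = n r\<close> with \<open>n \<in> N\<close>, \<open>r \<in> R\<close>, and using that \<open>N\<close> is abelian, every conjugate of
  \<open>x\<^sup>\<plusminus>\<^sup>1\<close> is already a conjugate by an element of \<open>R\<close>. So the set \<open>C\<close> of these conjugates is
  finite, commutative and invariant under conjugation, and every group element is a word over
  \<open>C\<close> followed by an element of \<open>R\<close>.

  Take as generators a finite symmetric generating set, \<open>R\<^sup>\<plusminus>\<^sup>1\<close>, \<open>x\<^sup>\<plusminus>\<^sup>1\<close> and the power letters
  \<open>x\<^sup>\<plusminus>\<^sup>M\<close>, where \<open>M = D + 1\<close> and \<open>D\<close> bounds the number of conjugates needed to move an ordinary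
  generator past an element of \<open>R\<close>. Bringing a word into this normal form costs at most \<open>D\<close>
  conjugates per ordinary letter and \<open>M\<close> per power letter; as \<open>C\<close> is commutative, the resulting
  word over \<open>C\<close> can be sorted into powers \<open>(r x\<^sup>\<plusminus>\<^sup>1 r\<^sup>-\<^sup>1)\<^sup>m\<close> and respelled with the power
  letters, at cost about \<open>1/M\<close> per conjugate. Comparing lengths, a geodesic contains boundedly
  many ordinary letters, and it never contains \<open>x\<^sup>M\<close> next to \<open>x\<^sup>-\<^sup>M\<close>. Hence it consists of
  boundedly many runs of a repeated letter, and there are only polynomially many such words.\<close>

section \<open>Words in a group\<close>

lemma word_eval_Nil [simp]: "word_eval G [] = \<one>\<^bsub>G\<^esub>"
  by (simp add: word_eval_def)

lemma word_eval_Cons [simp]: "word_eval G (a # w) = a \<otimes>\<^bsub>G\<^esub> word_eval G w"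
  by (simp add: word_eval_def)

context group
begin

lemma word_eval_closed [simp]: "set w \<subseteq> carrier G \<Longrightarrow> word_eval G w \<in> carrier G"
  by (induction w) auto

lemma word_eval_append:
  "set u \<subseteq> carrier G \<Longrightarrow> set v \<subseteq> carrier G \<Longrightarrow>
   word_eval G (u @ v) = word_eval G u \<otimes> word_eval G v"
  by (induction u) (auto simp: m_assoc)

lemma word_eval_replicate: "a \<in> carrier G \<Longrightarrow> word_eval G (replicate m a) = a [^] m"
proof (induction m)
  case (Suc m)
  then show ?case by (metis nat_pow_Suc2 replicate_Suc word_eval_Cons)
qed simp

lemma word_eval_map_conj:
  assumes "a \<in> carrier G" "set w \<subseteq> carrier G"
  shows "word_eval G (map (\<lambda>c. a \<otimes> c \<otimes> inv a) w) = a \<otimes> word_eval G w \<otimes> inv a"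
  using assms(2)
proof (induction w)
  case (Cons b w)
  then have "b \<in> carrier G" "set w \<subseteq> carrier G" by auto
  with Cons assms(1) show ?case
    by (simp add: m_assoc[symmetric]) (simp add: m_assoc)
qed (use assms in simp)

lemma word_eval_commute:
  assumes "set w \<subseteq> A" "A \<subseteq> carrier G" "a \<in> carrier G" "\<And>b. b \<in> A \<Longrightarrow> a \<otimes> b = b \<otimes> a"
  shows "a \<otimes> word_eval G w = word_eval G w \<otimes> a"
  using assms(1)
proof (induction w)
  case (Cons b w)
  then have "b \<in> A" "b \<in> carrier G" "set w \<subseteq> carrier G" using assms(2) by auto
  with Cons assms(3,4) show ?case
    by (simp add: m_assoc[symmetric]) (simp add: m_assoc)
qed (use assms in simp)

lemma word_eval_mset_eq:
  assumes "A \<subseteq> carrier G" "\<And>a b. a \<in> A \<Longrightarrow> b \<in> A \<Longrightarrow> a \<otimes> b = b \<otimes> a"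
    and "set u \<subseteq> A" "mset u = mset v"
  shows "word_eval G u = word_eval G v"
  using assms(3,4)
proof (induction u arbitrary: v)
  case (Cons a u)
  then obtain p q where v: "v = p @ a # q"
    by (metis list.set_intros(1) set_mset_mset split_list)
  with Cons.prems have pq: "set p \<subseteq> A" "set q \<subseteq> A" "a \<in> A"
    by (metis set_mset_mset Un_subset_iff insert_subset set_append set_simps(2))+
  then have car: "set p \<subseteq> carrier G" "set q \<subseteq> carrier G" "a \<in> carrier G"
    using assms(1) by auto
  have "word_eval G u = word_eval G (p @ q)"
    using Cons v by auto
  moreover have "a \<otimes> word_eval G p = word_eval G p \<otimes> a"
    using word_eval_commute[OF pq(1) assms(1) car(3)] assms(2) pq(3) by blast
  ultimately show ?case
    using car v by (simp add: word_eval_append m_assoc[symmetric])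
qed simp

lemma generate_imp_word:
  assumes "S \<subseteq> carrier G" "h \<in> generate G S"
  shows "\<exists>w. set w \<subseteq> S \<union> m_inv G ` S \<and> word_eval G w = h"
  using assms(2)
proof induction
  case one
  show ?case by (rule exI[of _ "[]"]) simp
next
  case (incl h)
  then show ?case using assms(1) by (intro exI[of _ "[h]"]) auto
next
  case (inv h)
  then show ?case using assms(1) by (intro exI[of _ "[inv h]"]) auto
next
  case (eng h1 h2)
  then obtain w1 w2 where "set w1 \<subseteq> S \<union> m_inv G ` S" "word_eval G w1 = h1"
    "set w2 \<subseteq> S \<union> m_inv G ` S" "word_eval G w2 = h2" by blast
  moreover from this have "set w1 \<subseteq> carrier G" "set w2 \<subseteq> carrier G"
    using assms(1) by auto
  ultimately show ?case
    by (intro exI[of _ "w1 @ w2"]) (simp add: word_eval_append)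
qed

lemma conj_pow:
  "r \<in> carrier G \<Longrightarrow> s \<in> carrier G \<Longrightarrow> (r \<otimes> s \<otimes> inv r) [^] (m::nat) = r \<otimes> s [^] m \<otimes> inv r"
  by (induction m) (simp_all add: m_assoc[symmetric], simp_all add: m_assoc)

lemma conj_inv:
  "x \<in> carrier G \<Longrightarrow> g \<in> carrier G \<Longrightarrow> g \<otimes> inv x \<otimes> inv g = inv (g \<otimes> x \<otimes> inv g)"
  by (simp add: inv_mult_group m_assoc)

lemma conj_conj:
  "a \<in> carrier G \<Longrightarrow> g \<in> carrier G \<Longrightarrow> s \<in> carrier G \<Longrightarrow>
   a \<otimes> (g \<otimes> s \<otimes> inv g) \<otimes> inv a = (a \<otimes> g) \<otimes> s \<otimes> inv (a \<otimes> g)"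
  by (simp add: inv_mult_group m_assoc)

lemma power_word:
  assumes "s \<in> carrier G" "0 < M"
  shows "\<exists>w. set w \<subseteq> {s, s [^] M} \<and> word_eval G w = s [^] m \<and> M * length w \<le> m + M * M"
proof (intro exI conjI)
  let ?w = "replicate (m div M) (s [^] M) @ replicate (m mod M) s"
  show "set ?w \<subseteq> {s, s [^] M}" by auto
  have "word_eval G ?w = (s [^] M) [^] (m div M) \<otimes> s [^] (m mod M)"
    using assms(1) by (simp add: word_eval_append word_eval_replicate set_replicate_conv_if)
  also have "\<dots> = s [^] m"
    using assms(1) by (simp add: nat_pow_pow nat_pow_mult)
  finally show "word_eval G ?w = s [^] m" .
  have "M * length ?w = M * (m div M) + M * (m mod M)"
    by (simp add: algebra_simps)
  also have "\<dots> \<le> m + M * M"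
    using times_div_less_eq_dividend[of M m] mod_less_divisor[OF assms(2), of m]
    by (intro add_mono mult_le_mono2) simp_all
  finally show "M * length ?w \<le> m + M * M" .
qed

end

section \<open>Words with few letter changes\<close>

fun changes :: "'a list \<Rightarrow> nat" where
  "changes (a # b # w) = (if a = b then 0 else 1) + changes (b # w)"
| "changes _ = 0"

text \<open>If no two distinct adjacent letters both satisfy \<open>P\<close>, then every change of letter
  is next to a letter outside \<open>P\<close>, and each such letter accounts for at most two changes.\<close>

lemma changes_le_twice_count:
  assumes "\<And>p a b q. w = p @ a # b # q \<Longrightarrow> a \<noteq> b \<Longrightarrow> \<not> (P a \<and> P b)"
  shows "changes w \<le> 2 * length (filter (\<lambda>a. \<not> P a) w)"
proof -
  have "changes w + (if w \<noteq> [] \<and> \<not> P (hd w) then 1 else 0) \<le> 2 * length (filter (\<lambda>a. \<not> P a) w)"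
    using assms
  proof (induction w rule: changes.induct)
    case (1 a b w)
    have "changes (b # w) + (if \<not> P b then 1 else 0) \<le> 2 * length (filter (\<lambda>a. \<not> P a) (b # w))"
      using "1.IH" "1.prems"[of "_ # _"] by fastforce
    moreover have "a \<noteq> b \<longrightarrow> \<not> (P a \<and> P b)"
      using "1.prems"[of "[]"] by simp
    ultimately show ?case
      by (cases "P a"; cases "P b"; cases "a = b") simp_all
  qed auto
  then show ?thesis by simp
qed

definition concat_runs :: "(nat \<times> 'a) list \<Rightarrow> 'a list" where
  "concat_runs rs = concat (map (\<lambda>(l, a). replicate l a) rs)"

lemma concat_runs_Cons [simp]: "concat_runs ((l, a) # rs) = replicate l a @ concat_runs rs"
  by (simp add: concat_runs_def)

lemma run_length_encoding:
  "set w \<subseteq> A \<Longrightarrow>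
   \<exists>rs. w = concat_runs rs \<and> length rs \<le> changes w + 1 \<and> set rs \<subseteq> {1..length w} \<times> A"
proof (induction w rule: changes.induct)
  case (1 a b w)
  obtain rs where rs: "b # w = concat_runs rs" "length rs \<le> changes (b # w) + 1"
    "set rs \<subseteq> {1..length (b # w)} \<times> A"
    using "1.IH" "1.prems" by (metis list.set_intros(2) subset_code(1))
  then obtain l c rs' where rs': "rs = (l, c) # rs'" "1 \<le> l"
    by (cases rs) (auto simp: concat_runs_def)
  then have "c = b"
    using rs(1) by (cases l) auto
  show ?case
  proof (cases "a = b")
    case True
    have "a # b # w = concat_runs ((Suc l, b) # rs')"
      using rs(1) rs' True \<open>c = b\<close> by (cases l) auto
    moreover have "length ((Suc l, b) # rs') \<le> changes (a # b # w) + 1"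
      using rs(2) rs' True by simp
    moreover have "set ((Suc l, b) # rs') \<subseteq> {1..length (a # b # w)} \<times> A"
      using rs(3) rs' \<open>c = b\<close> by auto
    ultimately show ?thesis by blast
  next
    case False
    have "a # b # w = concat_runs ((1, a) # rs)"
      using rs(1) by simp
    moreover have "length ((1, a) # rs) \<le> changes (a # b # w) + 1"
      using rs(2) False by simp
    moreover have "set ((1, a) # rs) \<subseteq> {1..length (a # b # w)} \<times> A"
      using rs(3) "1.prems" by auto
    ultimately show ?thesis by blast
  qed
next
  case "2_1"
  show ?case by (intro exI[of _ "[]"]) (simp add: concat_runs_def)
next
  case ("2_2" v)
  then show ?case by (intro exI[of _ "[(1, v)]"]) (simp add: concat_runs_def)
qed

lemma card_lists_length_le_bound:
  assumes "finite A"
  shows "card {xs. set xs \<subseteq> A \<and> length xs \<le> k} \<le> (k + 1) * (card A + 1) ^ k"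
proof -
  have "(\<Sum>i\<le>k. card A ^ i) \<le> (\<Sum>i\<le>k. (card A + 1) ^ k)"
    by (intro sum_mono order.trans[OF power_mono power_increasing]) auto
  then show ?thesis
    by (simp add: card_lists_length_le[OF assms])
qed

lemma card_few_changes_polynomial:
  fixes J :: nat
  assumes "finite A"
  shows "\<exists>c d. \<forall>n::nat. n \<ge> 1 \<longrightarrow> card {w. set w \<subseteq> A \<and> length w \<le> n \<and> changes w \<le> J} \<le> c * n ^ d"
proof (intro exI allI impI)
  fix n :: nat assume n: "n \<ge> 1"
  let ?P = "{1..n} \<times> A"
  let ?R = "{rs. set rs \<subseteq> ?P \<and> length rs \<le> J + 1}"
  have fin: "finite ?R" using assms by (simp add: finite_lists_length_le)
  have "{w. set w \<subseteq> A \<and> length w \<le> n \<and> changes w \<le> J} \<subseteq> concat_runs ` ?R"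
  proof
    fix w assume "w \<in> {w. set w \<subseteq> A \<and> length w \<le> n \<and> changes w \<le> J}"
    then have w: "set w \<subseteq> A" "length w \<le> n" "changes w \<le> J" by auto
    then obtain rs where "w = concat_runs rs" "length rs \<le> changes w + 1"
      "set rs \<subseteq> {1..length w} \<times> A"
      using run_length_encoding by blast
    with w show "w \<in> concat_runs ` ?R" by fastforce
  qed
  then have "card {w. set w \<subseteq> A \<and> length w \<le> n \<and> changes w \<le> J} \<le> card ?R"
    using fin by (meson card_image_le card_mono finite_imageI order.trans)
  also have "\<dots> \<le> (J + 2) * (card ?P + 1) ^ (J + 1)"
    using card_lists_length_le_bound[of ?P "J + 1"] assms by simp
  also have "\<dots> \<le> (J + 2) * (n * (card A + 1)) ^ (J + 1)"
    using n by (intro mult_le_mono2 power_mono) (auto simp: card_cartesian_product algebra_simps)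
  also have "\<dots> = ((J + 2) * (card A + 1) ^ (J + 1)) * n ^ (J + 1)"
    by (simp only: power_mult_distrib mult.commute mult.left_commute)
  finally show "card {w. set w \<subseteq> A \<and> length w \<le> n \<and> changes w \<le> J}
      \<le> ((J + 2) * (card A + 1) ^ (J + 1)) * n ^ (J + 1)" .
qed

lemma word_length_le:
  "set w \<subseteq> S \<Longrightarrow> word_length G S (word_eval G w) \<le> length w"
  unfolding word_length_def by (rule Least_le) blast

lemma geodesic_length_le:
  "geodesic G S w \<Longrightarrow> set w' \<subseteq> S \<Longrightarrow> word_eval G w' = word_eval G w \<Longrightarrow> length w \<le> length w'"
  unfolding geodesic_def by (metis word_length_le)

lemma (in group) geodesic_no_cancellation:
  assumes "geodesic G S (p @ a # b # q)" "S \<subseteq> carrier G"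
  shows "a \<otimes> b \<noteq> \<one>"
proof
  assume ab: "a \<otimes> b = \<one>"
  have car: "set p \<subseteq> carrier G" "set q \<subseteq> carrier G" "a \<in> carrier G" "b \<in> carrier G"
    using assms unfolding geodesic_def by auto
  have "word_eval G (p @ q) = word_eval G (p @ a # b # q)"
    using car by (simp add: word_eval_append m_assoc[symmetric] ab)
  moreover have "set (p @ q) \<subseteq> S"
    using assms(1) unfolding geodesic_def by auto
  ultimately show False
    using geodesic_length_le[OF assms(1)] by fastforce
qed

text \<open>Distinct adjacent letters from \<open>{y, y\<^sup>-\<^sup>1}\<close> would cancel.\<close>

lemma (in group) geodesic_changes_le:
  assumes "geodesic G S w" "S \<subseteq> carrier G" "y \<in> carrier G"
  shows "changes w \<le> 2 * length (filter (\<lambda>a. a \<notin> {y, inv y}) w)"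
proof -
  have "\<not> (a \<in> {y, inv y} \<and> b \<in> {y, inv y})" if "w = p @ a # b # q" "a \<noteq> b" for p a b q
    using geodesic_no_cancellation[of S p a b q] assms that by auto
  then show ?thesis
    using changes_le_twice_count[of w "\<lambda>a. a \<in> {y, inv y}"] by blast
qed

lemma geodesic_growth_polynomial_if_changes_bounded:
  assumes "finite S" "\<And>w. geodesic G S w \<Longrightarrow> changes w \<le> J"
  shows "\<exists>c d :: nat. \<forall>n :: nat. n \<ge> 1 \<longrightarrow> geodesic_growth G S n \<le> c * n ^ d"
proof -
  obtain c d where cd: "\<And>n::nat. n \<ge> 1 \<Longrightarrow>
      card {w. set w \<subseteq> S \<and> length w \<le> n \<and> changes w \<le> J} \<le> c * n ^ d"
    using card_few_changes_polynomial[OF assms(1)] by blast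
  have "geodesic_growth G S n \<le> card {w. set w \<subseteq> S \<and> length w \<le> n \<and> changes w \<le> J}" for n
    unfolding geodesic_growth_def using assms
    by (intro card_mono) (auto simp: geodesic_def intro: rev_finite_subset[OF finite_lists_length_le])
  then show ?thesis
    using cd order.trans by blast
qed

section \<open>Conjugates of an element with abelian normal closure of finite index\<close>

lemma (in group) finite_transversal:
  assumes "subgroup H G" "finite (rcosets H)"
  shows "\<exists>R. finite R \<and> R \<subseteq> carrier G \<and> (\<forall>g\<in>carrier G. \<exists>h\<in>H. \<exists>r\<in>R. g = h \<otimes> r)"
proof -
  have "\<forall>C\<in>rcosets H. \<exists>r. r \<in> carrier G \<and> C = H #> r"
    by (auto simp: RCOSETS_def)
  then obtain rep where rep: "\<And>C. C \<in> rcosets H \<Longrightarrow> rep C \<in> carrier G \<and> C = H #> rep C"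
    by metis
  have "\<exists>h\<in>H. \<exists>r\<in>rep ` (rcosets H). g = h \<otimes> r" if g: "g \<in> carrier G" for g
  proof -
    have C: "H #> g \<in> rcosets H"
      using g subgroup.subset[OF assms(1)] by (rule rcosetsI[rotated])
    have "g \<in> H #> rep (H #> g)"
      using rep[OF C] rcos_self[OF g assms(1)] by simp
    then show ?thesis
      using C unfolding r_coset_def by blast
  qed
  then show ?thesis
    using assms(2) rep by (intro exI[of _ "rep ` (rcosets H)"]) blast
qed

lemma (in group) normal_closure_subgroup:
  "x \<in> carrier G \<Longrightarrow> subgroup (normal_closure G x) G"
  unfolding normal_closure_def by (rule generate_is_subgroup) auto

lemma (in group) conj_in_normal_closure:
  "x \<in> carrier G \<Longrightarrow> g \<in> carrier G \<Longrightarrow> g \<otimes> x \<otimes> inv g \<in> normal_closure G x"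
  unfolding normal_closure_def by (blast intro: generate.incl)

locale abelian_normal_closure = group +
  fixes x :: 'a and R :: "'a set"
  assumes x_closed: "x \<in> carrier G"
    and normal_closure_comm:
      "\<And>a b. a \<in> normal_closure G x \<Longrightarrow> b \<in> normal_closure G x \<Longrightarrow> a \<otimes> b = b \<otimes> a"
    and finite_R: "finite R"
    and R_closed: "R \<subseteq> carrier G"
    and coset_decomposition: "\<And>g. g \<in> carrier G \<Longrightarrow> \<exists>n\<in>normal_closure G x. \<exists>r\<in>R. g = n \<otimes> r"
begin

definition conjugates :: "'a set" where
  "conjugates = (\<lambda>(g, s). g \<otimes> s \<otimes> inv g) ` (carrier G \<times> {x, inv x})"

lemma conjugates_subset_normal_closure: "conjugates \<subseteq> normal_closure G x"
  using conj_in_normal_closure[OF x_closed] conj_inv[OF x_closed]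
    subgroup.m_inv_closed[OF normal_closure_subgroup[OF x_closed]]
  by (auto simp: conjugates_def)

lemma conjugates_closed: "conjugates \<subseteq> carrier G"
  using conjugates_subset_normal_closure subgroup.subset[OF normal_closure_subgroup[OF x_closed]]
  by blast

lemma conjugates_comm: "a \<in> conjugates \<Longrightarrow> b \<in> conjugates \<Longrightarrow> a \<otimes> b = b \<otimes> a"
  using conjugates_subset_normal_closure normal_closure_comm by blast

lemma conj_conjugates: "a \<in> carrier G \<Longrightarrow> v \<in> conjugates \<Longrightarrow> a \<otimes> v \<otimes> inv a \<in> conjugates"
  using x_closed by (auto simp: conjugates_def conj_conj intro!: image_eqI[of _ _ "(a \<otimes> _, _)"])

lemma x_in_conjugates: "x \<in> conjugates" "inv x \<in> conjugates"
  using x_closed unfolding conjugates_def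
  by (auto intro: rev_image_eqI[of "(\<one>, x)"] rev_image_eqI[of "(\<one>, inv x)"])

text \<open>Writing \<open>g = n \<otimes> r\<close> with \<open>n\<close> in the abelian normal closure, \<open>n\<close> commutes
  with the conjugate by \<open>r\<close>, so conjugating by \<open>g\<close> is the same as conjugating by \<open>r\<close>.\<close>

lemma conj_eq_transversal_conj:
  assumes g: "g \<in> carrier G" and s: "s \<in> {x, inv x}"
  shows "\<exists>r\<in>R. g \<otimes> s \<otimes> inv g = r \<otimes> s \<otimes> inv r"
proof -
  obtain n r where n: "n \<in> normal_closure G x" and r: "r \<in> R" and "g = n \<otimes> r"
    using coset_decomposition[OF g] by blast
  have car: "n \<in> carrier G" "r \<in> carrier G" "s \<in> carrier G"
    using n r s R_closed x_closed subgroup.subset[OF normal_closure_subgroup[OF x_closed]] by auto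
  have "r \<otimes> s \<otimes> inv r \<in> normal_closure G x"
    using car s conjugates_subset_normal_closure by (auto simp: conjugates_def)
  then have "n \<otimes> (r \<otimes> s \<otimes> inv r) = (r \<otimes> s \<otimes> inv r) \<otimes> n"
    using n normal_closure_comm by blast
  then have "g \<otimes> s \<otimes> inv g = (r \<otimes> s \<otimes> inv r) \<otimes> n \<otimes> inv n"
    using car \<open>g = n \<otimes> r\<close> by (simp add: conj_conj[symmetric])
  then show ?thesis
    using car r by (intro bexI[of _ r]) (simp_all add: m_assoc)
qed

lemma conjugates_eq: "conjugates = (\<lambda>(r, s). r \<otimes> s \<otimes> inv r) ` (R \<times> {x, inv x})"
  using conj_eq_transversal_conj R_closed unfolding conjugates_def by fastforce

lemma finite_conjugates: "finite conjugates"
  using finite_R by (simp add: conjugates_eq)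

section \<open>Normal forms\<close>

definition normal_form :: "'a \<Rightarrow> 'a list \<Rightarrow> 'a \<Rightarrow> bool" where
  "normal_form g \<delta> r \<longleftrightarrow> set \<delta> \<subseteq> conjugates \<and> r \<in> R \<and> g = word_eval G \<delta> \<otimes> r"

lemma normal_form_exists:
  assumes "g \<in> carrier G"
  shows "\<exists>\<delta> r. normal_form g \<delta> r"
proof -
  obtain n r where n: "n \<in> normal_closure G x" and "r \<in> R" "g = n \<otimes> r"
    using coset_decomposition[OF assms] by blast
  let ?S = "(\<lambda>g. g \<otimes> x \<otimes> inv g) ` carrier G"
  have "?S \<union> m_inv G ` ?S \<subseteq> conjugates"
    using x_closed unfolding conjugates_def
    by (auto simp: conj_inv[symmetric] intro: rev_image_eqI[of "(_, x)"] rev_image_eqI[of "(_, inv x)"])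
  moreover obtain \<delta> where "set \<delta> \<subseteq> ?S \<union> m_inv G ` ?S" "word_eval G \<delta> = n"
    using generate_imp_word[of ?S n] n x_closed by (auto simp: normal_closure_def)
  ultimately show ?thesis
    using \<open>r \<in> R\<close> \<open>g = n \<otimes> r\<close> unfolding normal_form_def by blast
qed

lemma bounded_normal_forms:
  assumes "finite F" "F \<subseteq> carrier G"
  shows "\<exists>D. \<forall>g\<in>F. \<exists>\<delta> r. normal_form g \<delta> r \<and> length \<delta> \<le> D"
proof -
  obtain \<delta> where "\<And>g. g \<in> F \<Longrightarrow> \<exists>r. normal_form g (\<delta> g) r"
    using normal_form_exists assms(2) by (metis subsetD)
  moreover have "length (\<delta> g) \<le> Max (length ` \<delta> ` F)" if "g \<in> F" for g
    using assms(1) that by (intro Max_ge) auto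
  ultimately show ?thesis by blast
qed

lemma normal_form_mult:
  assumes nf: "normal_form g \<delta> r" and a: "a \<in> carrier G" and nf': "normal_form (a \<otimes> r) \<delta>' r'"
  shows "normal_form (a \<otimes> g) (map (\<lambda>c. a \<otimes> c \<otimes> inv a) \<delta> @ \<delta>') r'"
proof -
  have car: "set \<delta> \<subseteq> carrier G" "set \<delta>' \<subseteq> carrier G" "r \<in> carrier G" "r' \<in> carrier G"
    using nf nf' conjugates_closed R_closed by (auto simp: normal_form_def)
  then have "set (map (\<lambda>c. a \<otimes> c \<otimes> inv a) \<delta>) \<subseteq> carrier G"
    using a by auto
  then have "word_eval G (map (\<lambda>c. a \<otimes> c \<otimes> inv a) \<delta> @ \<delta>') \<otimes> r'
      = (a \<otimes> word_eval G \<delta> \<otimes> inv a) \<otimes> (word_eval G \<delta>' \<otimes> r')"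
    using a car by (simp add: word_eval_append word_eval_map_conj m_assoc)
  also have "\<dots> = (a \<otimes> word_eval G \<delta> \<otimes> inv a) \<otimes> (a \<otimes> r)"
    using nf' by (simp add: normal_form_def)
  also have "\<dots> = a \<otimes> g"
    using a car nf by (simp add: normal_form_def m_assoc inv_solve_left')
  finally show ?thesis
    using nf nf' a conj_conjugates by (auto simp: normal_form_def)
qed

lemma normal_form_mult_power:
  assumes nf: "normal_form g \<delta> r" and s: "s \<in> {x, inv x}"
  shows "normal_form (s [^] M \<otimes> g) (replicate M s @ \<delta>) r"
proof -
  have "set (replicate M s) \<subseteq> carrier G" "set \<delta> \<subseteq> carrier G" "r \<in> carrier G" "s \<in> carrier G"
    using s x_closed nf conjugates_closed R_closed by (auto simp: normal_form_def)
  then show ?thesis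
    using nf s x_in_conjugates by (auto simp: normal_form_def word_eval_append word_eval_replicate m_assoc)
qed

section \<open>Geodesics for the generating set with power letters\<close>

definition power_letters :: "nat \<Rightarrow> 'a set" where
  "power_letters M = {x [^] M, inv (x [^] M)}"

lemma power_letters_closed: "power_letters M \<subseteq> carrier G"
  using x_closed by (simp add: power_letters_def)

lemma power_letters_eq: "power_letters M = (\<lambda>s. s [^] M) ` {x, inv x}"
  using x_closed by (simp add: power_letters_def nat_pow_inv)

text \<open>A letter of \<open>X\<^sub>0\<close> is pushed through the conjugates to the transversal part at a cost of
  at most \<open>D\<close> new conjugates; a power letter \<open>x\<^sup>\<plusminus>\<^sup>M\<close> costs exactly \<open>M\<close>.\<close>

lemma word_normal_form_length:
  assumes X0: "X0 \<subseteq> carrier G"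
    and D: "\<forall>g\<in>insert \<one> ((\<lambda>(a, r). a \<otimes> r) ` (X0 \<times> R)). \<exists>\<delta> r. normal_form g \<delta> r \<and> length \<delta> \<le> D"
    and w: "set w \<subseteq> X0 \<union> power_letters M"
  shows "\<exists>\<delta> r. normal_form (word_eval G w) \<delta> r \<and>
    length \<delta> \<le> D * length (filter (\<lambda>a. a \<notin> power_letters M) w)
      + M * length (filter (\<lambda>a. a \<in> power_letters M) w) + D"
  using w
proof (induction w)
  case Nil
  then show ?case using D by auto
next
  case (Cons a w)
  then obtain \<delta> r where \<delta>: "normal_form (word_eval G w) \<delta> r"
    and len: "length \<delta> \<le> D * length (filter (\<lambda>a. a \<notin> power_letters M) w)
      + M * length (filter (\<lambda>a. a \<in> power_letters M) w) + D" by auto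
  show ?case
  proof (cases "a \<in> power_letters M")
    case True
    then obtain s where "s \<in> {x, inv x}" "a = s [^] M"
      by (auto simp: power_letters_eq)
    then have "normal_form (word_eval G (a # w)) (replicate M s @ \<delta>) r"
      using normal_form_mult_power[OF \<delta>] by simp
    then show ?thesis
      using len True by (intro exI) auto
  next
    case False
    then have "a \<in> X0" "r \<in> R"
      using Cons.prems \<delta> by (auto simp: normal_form_def)
    then obtain \<delta>' r' where \<delta>': "normal_form (a \<otimes> r) \<delta>' r'" "length \<delta>' \<le> D"
      using D by blast
    have "normal_form (word_eval G (a # w)) (map (\<lambda>c. a \<otimes> c \<otimes> inv a) \<delta> @ \<delta>') r'"
      using normal_form_mult[OF \<delta> _ \<delta>'(1)] \<open>a \<in> X0\<close> X0 by auto
    then show ?thesis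
      using len \<delta>'(2) False by (intro exI) auto
  qed
qed

lemma conjugate_power_word:
  assumes "v \<in> conjugates" "0 < M"
  shows "\<exists>w. set w \<subseteq> R \<union> m_inv G ` R \<union> {x, inv x} \<union> power_letters M \<and>
    word_eval G w = v [^] m \<and> M * length w \<le> m + M * (M + 2)"
proof -
  obtain r s where r: "r \<in> R" and s: "s \<in> {x, inv x}" and v: "v = r \<otimes> s \<otimes> inv r"
    using assms(1) by (auto simp: conjugates_eq)
  have car: "r \<in> carrier G" "s \<in> carrier G"
    using r s R_closed x_closed by auto
  obtain u where u: "set u \<subseteq> {s, s [^] M}" "word_eval G u = s [^] m" "M * length u \<le> m + M * M"
    using power_word[OF car(2) assms(2)] by blast
  have "set u \<subseteq> carrier G"
    using u(1) car by auto
  then have "word_eval G (r # u @ [inv r]) = r \<otimes> s [^] m \<otimes> inv r"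
    using car u(2) by (simp add: word_eval_append m_assoc)
  then have "word_eval G (r # u @ [inv r]) = v [^] m"
    using car by (simp add: v conj_pow)
  moreover have "set (r # u @ [inv r]) \<subseteq> R \<union> m_inv G ` R \<union> {x, inv x} \<union> power_letters M"
    using r s u(1) by (auto simp: power_letters_eq)
  moreover have "M * length (r # u @ [inv r]) \<le> m + M * (M + 2)"
    using u(3) by (simp add: algebra_simps)
  ultimately show ?thesis by blast
qed

text \<open>Since the conjugates commute, a word over them can be sorted into blocks \<open>v\<^sup>m\<close>, one
  for each of the finitely many conjugates \<open>v\<close>, and each block is shortened by the power letters.\<close>

lemma conjugates_word_rewrite:
  assumes "0 < M" "set V \<subseteq> conjugates" "set \<omega> \<subseteq> set V"
  shows "\<exists>w. set w \<subseteq> R \<union> m_inv G ` R \<union> {x, inv x} \<union> power_letters M \<and>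
    word_eval G w = word_eval G \<omega> \<and> M * length w \<le> length \<omega> + M * (M + 2) * length V"
  using assms(2,3)
proof (induction V arbitrary: \<omega>)
  case Nil
  then show ?case by (intro exI[of _ "[]"]) simp
next
  case (Cons v V)
  let ?\<omega>2 = "filter (\<lambda>z. v \<noteq> z) \<omega>"
  define m where "m = count (mset \<omega>) v"
  have \<omega>1: "filter ((=) v) \<omega> = replicate m v"
    unfolding m_def by (rule replicate_count_mset_eq_filter_eq[symmetric])
  have "mset \<omega> = mset (replicate m v @ ?\<omega>2)"
    by (simp flip: \<omega>1 add: mset_filter multiset_partition)
  then have "word_eval G \<omega> = word_eval G (replicate m v @ ?\<omega>2)"
    using Cons.prems by (intro word_eval_mset_eq[OF conjugates_closed conjugates_comm]) auto
  moreover have "set (replicate m v) \<subseteq> carrier G" "set ?\<omega>2 \<subseteq> carrier G" "v \<in> carrier G"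
    using Cons.prems conjugates_closed by auto
  ultimately have "word_eval G \<omega> = v [^] m \<otimes> word_eval G ?\<omega>2"
    by (simp add: word_eval_append word_eval_replicate)
  moreover have "length \<omega> = m + length ?\<omega>2"
    using sum_length_filter_compl[of "(=) v" \<omega>] \<omega>1 by simp
  moreover obtain w1 where "set w1 \<subseteq> R \<union> m_inv G ` R \<union> {x, inv x} \<union> power_letters M"
    "word_eval G w1 = v [^] m" "M * length w1 \<le> m + M * (M + 2)"
    using conjugate_power_word Cons.prems assms(1) by (meson list.set_intros(1) subsetD)
  moreover obtain w2 where "set w2 \<subseteq> R \<union> m_inv G ` R \<union> {x, inv x} \<union> power_letters M"
    "word_eval G w2 = word_eval G ?\<omega>2" "M * length w2 \<le> length ?\<omega>2 + M * (M + 2) * length V"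
    using Cons.IH[of ?\<omega>2] Cons.prems by auto
  moreover have "R \<union> m_inv G ` R \<union> {x, inv x} \<union> power_letters M \<subseteq> carrier G"
    using R_closed x_closed power_letters_closed by auto
  ultimately show ?case
    by (intro exI[of _ "w1 @ w2"]) (auto simp: word_eval_append algebra_simps subset_trans)
qed

text \<open>Rewriting the normal form of a geodesic with the power letters gives a word of length
  about \<open>D/M\<close> times the number of its non-power letters, so with \<open>M = D + 1\<close> a geodesic
  can contain only boundedly many of them.\<close>

lemma geodesic_few_non_power_letters:
  assumes X0: "X0 \<subseteq> carrier G" "R \<union> m_inv G ` R \<union> {x, inv x} \<subseteq> X0"
    and D: "\<forall>g\<in>insert \<one> ((\<lambda>(a, r). a \<otimes> r) ` (X0 \<times> R)). \<exists>\<delta> r. normal_form g \<delta> r \<and> length \<delta> \<le> D"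
  shows "\<exists>E. \<forall>w. geodesic G (X0 \<union> power_letters (Suc D)) w \<longrightarrow>
    length (filter (\<lambda>a. a \<notin> power_letters (Suc D)) w) \<le> E"
proof -
  define M where "M = Suc D"
  obtain V where V: "set V = conjugates"
    using finite_conjugates finite_list by blast
  have "length (filter (\<lambda>a. a \<notin> power_letters M) w) \<le> D + M * (M + 2) * length V + M"
    if geo: "geodesic G (X0 \<union> power_letters M) w" for w
  proof -
    let ?k = "length (filter (\<lambda>a. a \<notin> power_letters M) w)"
    let ?l = "length (filter (\<lambda>a. a \<in> power_letters M) w)"
    obtain \<delta> r where \<delta>: "normal_form (word_eval G w) \<delta> r" and len: "length \<delta> \<le> D * ?k + M * ?l + D"
      using word_normal_form_length[OF X0(1) D, of w M] geo unfolding geodesic_def by blast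
    obtain w' where w': "set w' \<subseteq> R \<union> m_inv G ` R \<union> {x, inv x} \<union> power_letters M"
      "word_eval G w' = word_eval G \<delta>" "M * length w' \<le> length \<delta> + M * (M + 2) * length V"
      using conjugates_word_rewrite[of M V \<delta>] \<delta> V by (auto simp: M_def normal_form_def)
    have letters: "set (w' @ [r]) \<subseteq> X0 \<union> power_letters M"
      using w'(1) X0(2) \<delta> unfolding normal_form_def by auto blast
    then have "set w' \<subseteq> carrier G" "r \<in> carrier G"
      using X0(1) power_letters_closed by auto
    then have "word_eval G (w' @ [r]) = word_eval G w"
      using w'(2) \<delta> by (simp add: word_eval_append normal_form_def)
    with letters have "length w \<le> length w' + 1"
      using geodesic_length_le[OF geo] by fastforce
    moreover have "length w = ?k + ?l"
      using sum_length_filter_compl[of "\<lambda>a. a \<in> power_letters M" w] by simp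
    ultimately have "M * (?k + ?l) \<le> M * length w' + M"
      using mult_le_mono2[of "length w" "length w' + 1" M] by simp
    then have "M * (?k + ?l) \<le> D * ?k + M * ?l + D + M * (M + 2) * length V + M"
      using len w'(3) by linarith
    then show ?thesis
      by (simp add: M_def algebra_simps)
  qed
  then show ?thesis
    unfolding M_def by blast
qed

theorem geodesic_growth_polynomial:
  assumes S: "finite S" "S \<subseteq> carrier G" "generate G S = carrier G"
  shows "\<exists>Y. finite_symmetric_generating_set G Y \<and>
    (\<exists>c d :: nat. \<forall>n :: nat. n \<ge> 1 \<longrightarrow> geodesic_growth G Y n \<le> c * n ^ d)"
proof -
  define B where "B = S \<union> R \<union> {x}"
  define X0 where "X0 = B \<union> m_inv G ` B"
  have B: "finite B" "B \<subseteq> carrier G"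
    using S finite_R R_closed x_closed by (auto simp: B_def)
  have X0: "finite X0" "X0 \<subseteq> carrier G" "R \<union> m_inv G ` R \<union> {x, inv x} \<subseteq> X0"
    using B by (auto simp: X0_def B_def)
  have "finite (insert \<one> ((\<lambda>(a, r). a \<otimes> r) ` (X0 \<times> R)))"
    "insert \<one> ((\<lambda>(a, r). a \<otimes> r) ` (X0 \<times> R)) \<subseteq> carrier G"
    using X0 finite_R R_closed by auto
  then obtain D where D: "\<forall>g\<in>insert \<one> ((\<lambda>(a, r). a \<otimes> r) ` (X0 \<times> R)).
      \<exists>\<delta> r. normal_form g \<delta> r \<and> length \<delta> \<le> D"
    using bounded_normal_forms by blast
  define Y where "Y = X0 \<union> power_letters (Suc D)"
  have Y: "finite Y" "Y \<subseteq> carrier G"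
    using X0 power_letters_closed by (auto simp: Y_def power_letters_def)
  obtain E where E: "\<And>w. geodesic G Y w \<Longrightarrow> length (filter (\<lambda>a. a \<notin> power_letters (Suc D)) w) \<le> E"
    using geodesic_few_non_power_letters[OF X0(2,3) D] unfolding Y_def by blast
  have "changes w \<le> 2 * E" if "geodesic G Y w" for w
    using geodesic_changes_le[OF that Y(2), of "x [^] Suc D"] E[OF that] x_closed
    by (simp add: power_letters_def)
  moreover have "finite_symmetric_generating_set G Y"
    unfolding finite_symmetric_generating_set_def
  proof (intro conjI ballI)
    show "inv y \<in> Y" if "y \<in> Y" for y
      using that B(2) x_closed by (auto simp: Y_def X0_def power_letters_def)
    have "S \<subseteq> Y"
      by (auto simp: Y_def X0_def B_def)
    then show "generate G Y = carrier G"
      using generate_incl[OF Y(2)] mono_generate[of S Y] S(3) by blast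
  qed (use Y in auto)
  ultimately show ?thesis
    using geodesic_growth_polynomial_if_changes_bounded[of Y G "2 * E"] Y(1) by blast
qed

end

theorem mainTheorem1:
  fixes G :: "('a, 'b) monoid_scheme"
  assumes "group G"
    and "finitely_generated G"
    and "\<exists>x \<in> carrier G.
           (\<forall>a \<in> normal_closure G x. \<forall>b \<in> normal_closure G x. a \<otimes>\<^bsub>G\<^esub> b = b \<otimes>\<^bsub>G\<^esub> a)
           \<and> finite (rcosets\<^bsub>G\<^esub> (normal_closure G x))"
  shows "\<exists>Y. finite_symmetric_generating_set G Y \<and>
           (\<exists>c d :: nat. \<forall>n :: nat. n \<ge> 1 \<longrightarrow> geodesic_growth G Y n \<le> c * n ^ d)"
proof -
  interpret group G by (rule assms(1))
  obtain x where x: "x \<in> carrier G"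
    and comm: "\<forall>a \<in> normal_closure G x. \<forall>b \<in> normal_closure G x. a \<otimes>\<^bsub>G\<^esub> b = b \<otimes>\<^bsub>G\<^esub> a"
    and index: "finite (rcosets\<^bsub>G\<^esub> (normal_closure G x))"
    using assms(3) by blast
  obtain R where "finite R" "R \<subseteq> carrier G"
    "\<forall>g\<in>carrier G. \<exists>n\<in>normal_closure G x. \<exists>r\<in>R. g = n \<otimes>\<^bsub>G\<^esub> r"
    using finite_transversal[OF normal_closure_subgroup[OF x] index] by blast
  then interpret abelian_normal_closure G x R
    using x comm by unfold_locales auto
  obtain S where "finite S" "S \<subseteq> carrier G" "generate G S = carrier G"
    using assms(2) by (auto simp: finitely_generated_def)
  then show ?thesis
    by (rule geodesic_growth_polynomial)
qed

end
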